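(* Let $\mathcal T\subseteq\mathcal{ST}\times\mathcal{ST}$ be a type simulation, i.e. $\mathcal T\subseteq F_{\leq}(\mathcal T)$, and let $B=\{(\mathcal M(S),\mathcal M(T)) : S\,\mathcal T\,T\}$. Then $B\subseteq\mathcal S(B,B)$.
   Context: Fix base types $BT$ with preorder $\leq_{\mathsf b}$ and labels $\mathcal L$. Session type terms: $T::=\mathsf{end}\mid ?[M]T\mid ![M]T\mid \&\langle l_1{:}T_1,\dots,l_n{:}T_n\rangle\mid \oplus\langle l_1{:}T_1,\dots,l_n{:}T_n\rangle\mid \mu X.T\mid X$, $M::=T\mid\mathtt t$. Contract terms: $\sigma::=\mathbf 1\mid ?\mathtt t.\sigma\mid !\mathtt t.\sigma\mid !(\sigma).\sigma\mid ?(\sigma).\sigma\mid \sum_{i\in I}?l_i.\sigma_i\mid \bigoplus_{i\in I}!l_i.\sigma_i\mid \mu x.\sigma\mid x$. $\mathcal{ST}$, $\mathcal{SC}$ are the closed guarded terms. $\mathcal M$ is the homomorphic translation ($\mathsf{end}\mapsto\mathbf 1$, $![\mathtt t]S\mapsto!\mathtt t.\mathcal M(S)$, $?[\mathtt t]S\mapsto?\mathtt t.\mathcal M(S)$, $![T]S\mapsto!(\mathcal M(T)).\mathcal M(S)$, $?[T]S\mapsto?(\mathcal M(T)).\mathcal M(S)$, $\&\langle l_i{:}S_i\rangle\mapsto\sum_i?l_i.\mathcal M(S_i)$, $\oplus\langle l_i{:}S_i\rangle\mapsto\bigoplus_i!l_i.\mathcal M(S_i)$, $\mu X.S\mapsto\mu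 x.\mathcal M(S)$, $X\mapsto x$). For both languages $\mathrm{unfold}(\mu x.\sigma')=\mathrm{unfold}(\sigma'[\mu x.\sigma'/x])$, otherwise identity. $\mathcal S(R,B)$: contract pairs $(\sigma_1,\sigma_2)$ such that, depending on $\mathrm{unfold}(\sigma_1)$: $\mathbf 1$ forces $\mathrm{unfold}(\sigma_2)=\mathbf 1$; $?\mathtt t_1.\sigma_1'$ forces $?\mathtt t_2.\sigma_2'$ with $\sigma_1'R\sigma_2'$, $\mathtt t_1\leq_{\mathsf b}\mathtt t_2$; $!\mathtt t_1.\sigma_1'$ forces $!\mathtt t_2.\sigma_2'$ with $\sigma_1'R\sigma_2'$, $\mathtt t_2\leq_{\mathsf b}\mathtt t_1$; $!(\sigma^m_1).\sigma_1'$ forces $!(\sigma^m_2).\sigma_2'$ with $\sigma_1'R\sigma_2'$, $\sigma^m_2B\sigma^m_1$; $?(\sigma^m_1).\sigma_1'$ forces $?(\sigma^m_2).\sigma_2'$ with $\sigma_1'R\sigma_2'$, $\sigma^m_1B\sigma^m_2$; $\sum_{i\in I}?l_i.\sigma^1_i$ forces $\sum_{j\in J}?l_j.\sigma^2_j$ with $I\subseteq J$, $\sigma^1_iR\sigma^2_i$; $\bigoplus_{i\in I}!l_i.\sigma^1_i$ forces $\bigoplus_{j\in J}!l_j.\sigma^2_j$ with $J\subseteq I$, $\sigma^1_jR\sigma^2_j$ (forced forms are those of $\mathrm{unfold}(\sigma_2)$). $F_{\leq}(R)$, for $R\subseteq\mathcal{ST}^2$: pairs $(T,S)$ such that: $\mathrm{unfold}(T)=\mathsf{end}$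 forces $\mathrm{unfold}(S)=\mathsf{end}$; $?[\mathtt t_1]S_1$ forces $\mathrm{unfold}(S)=?[\mathtt t_2]S_2$ with $S_1RS_2$, $\mathtt t_1\leq_{\mathsf b}\mathtt t_2$; $![\mathtt t_1]S_1$ forces $![\mathtt t_2]S_2$ with $S_1RS_2$, $\mathtt t_2\leq_{\mathsf b}\mathtt t_1$; $![T_1]S_1$ forces $![T_2]S_2$ with $S_1RS_2$, $T_2RT_1$; $?[T_1]S_1$ forces $?[T_2]S_2$ with $S_1RS_2$, $T_1RT_2$; $\&\langle l_1{:}T_1..l_m{:}T_m\rangle$ forces $\&\langle l_1{:}S_1..l_n{:}S_n\rangle$, $m\le n$, $T_iRS_i$; $\oplus\langle l_1{:}T_1..l_m{:}T_m\rangle$ forces $\oplus\langle l_1{:}S_1..l_n{:}S_n\rangle$, $n\le m$, $T_iRS_i$. *)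

theory Defs
  imports Main
begin

text \<open>Base types 'b, labels 'l, recursion variables nat.
  Constructors: end, ?[t]S, ![t]S, ?[T]S, ![T]S, branching, selection, mu X.T, X.\<close>

datatype ('b, 'l) stype =
    SEnd
  | SInB 'b "('b, 'l) stype"
  | SOutB 'b "('b, 'l) stype"
  | SInS "('b, 'l) stype" "('b, 'l) stype"
  | SOutS "('b, 'l) stype" "('b, 'l) stype"
  | SBra "('l \<times> ('b, 'l) stype) list"
  | SSel "('l \<times> ('b, 'l) stype) list"
  | SMu nat "('b, 'l) stype"
  | SVar nat

text \<open>Constructors: 1, ?t.s, !t.s, !(s).s, ?(s).s, external sum, internal sum, mu x.s, x.\<close>

datatype ('b, 'l) contract =
    COne
  | CInB 'b "('b, 'l) contract"
  | COutB 'b "('b, 'l) contract"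
  | COutC "('b, 'l) contract" "('b, 'l) contract"
  | CInC "('b, 'l) contract" "('b, 'l) contract"
  | CExt "('l \<times> ('b, 'l) contract) list"
  | CInt "('l \<times> ('b, 'l) contract) list"
  | CMu nat "('b, 'l) contract"
  | CVar nat

fun fvS :: "('b, 'l) stype \<Rightarrow> nat set" where
  "fvS SEnd = {}"
| "fvS (SInB t S) = fvS S"
| "fvS (SOutB t S) = fvS S"
| "fvS (SInS T S) = fvS T \<union> fvS S"
| "fvS (SOutS T S) = fvS T \<union> fvS S"
| "fvS (SBra bs) = (\<Union>p\<in>set bs. fvS (snd p))"
| "fvS (SSel bs) = (\<Union>p\<in>set bs. fvS (snd p))"
| "fvS (SMu X S) = fvS S - {X}"
| "fvS (SVar X) = {X}"

fun ugS :: "('b, 'l) stype \<Rightarrow> nat set" where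
  "ugS (SMu X S) = ugS S - {X}"
| "ugS (SVar X) = {X}"
| "ugS _ = {}"

fun guardedS :: "('b, 'l) stype \<Rightarrow> bool" where
  "guardedS SEnd = True"
| "guardedS (SInB t S) = guardedS S"
| "guardedS (SOutB t S) = guardedS S"
| "guardedS (SInS T S) = (guardedS T \<and> guardedS S)"
| "guardedS (SOutS T S) = (guardedS T \<and> guardedS S)"
| "guardedS (SBra bs) = (\<forall>p\<in>set bs. guardedS (snd p))"
| "guardedS (SSel bs) = (\<forall>p\<in>set bs. guardedS (snd p))"
| "guardedS (SMu X S) = (X \<notin> ugS S \<and> guardedS S)"
| "guardedS (SVar X) = True"

definition ST :: "('b, 'l) stype set" where
  "ST = {T. fvS T = {} \<and> guardedS T}"

fun fvC :: "('b, 'l) contract \<Rightarrow> nat set" where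
  "fvC COne = {}"
| "fvC (CInB t s) = fvC s"
| "fvC (COutB t s) = fvC s"
| "fvC (COutC m s) = fvC m \<union> fvC s"
| "fvC (CInC m s) = fvC m \<union> fvC s"
| "fvC (CExt bs) = (\<Union>p\<in>set bs. fvC (snd p))"
| "fvC (CInt bs) = (\<Union>p\<in>set bs. fvC (snd p))"
| "fvC (CMu x s) = fvC s - {x}"
| "fvC (CVar x) = {x}"

fun ugC :: "('b, 'l) contract \<Rightarrow> nat set" where
  "ugC (CMu x s) = ugC s - {x}"
| "ugC (CVar x) = {x}"
| "ugC _ = {}"

fun guardedC :: "('b, 'l) contract \<Rightarrow> bool" where
  "guardedC COne = True"
| "guardedC (CInB t s) = guardedC s"
| "guardedC (COutB t s) = guardedC s"
| "guardedC (COutC m s) = (guardedC m \<and> guardedC s)"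
| "guardedC (CInC m s) = (guardedC m \<and> guardedC s)"
| "guardedC (CExt bs) = (\<forall>p\<in>set bs. guardedC (snd p))"
| "guardedC (CInt bs) = (\<forall>p\<in>set bs. guardedC (snd p))"
| "guardedC (CMu x s) = (x \<notin> ugC s \<and> guardedC s)"
| "guardedC (CVar x) = True"

definition SC :: "('b, 'l) contract set" where
  "SC = {s. fvC s = {} \<and> guardedC s}"

text \<open>Substitution of a (closed) term for a variable; stops at rebinding.\<close>
fun substS :: "nat \<Rightarrow> ('b, 'l) stype \<Rightarrow> ('b, 'l) stype \<Rightarrow> ('b, 'l) stype" where
  "substS X U SEnd = SEnd"
| "substS X U (SInB t S) = SInB t (substS X U S)"
| "substS X U (SOutB t S) = SOutB t (substS X U S)"
| "substS X U (SInS T S) = SInS (substS X U T) (substS X U S)"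
| "substS X U (SOutS T S) = SOutS (substS X U T) (substS X U S)"
| "substS X U (SBra bs) = SBra (map (\<lambda>(l, S). (l, substS X U S)) bs)"
| "substS X U (SSel bs) = SSel (map (\<lambda>(l, S). (l, substS X U S)) bs)"
| "substS X U (SMu Y S) = (if X = Y then SMu Y S else SMu Y (substS X U S))"
| "substS X U (SVar Y) = (if X = Y then U else SVar Y)"

fun substC :: "nat \<Rightarrow> ('b, 'l) contract \<Rightarrow> ('b, 'l) contract \<Rightarrow> ('b, 'l) contract" where
  "substC x u COne = COne"
| "substC x u (CInB t s) = CInB t (substC x u s)"
| "substC x u (COutB t s) = COutB t (substC x u s)"
| "substC x u (COutC m s) = COutC (substC x u m) (substC x u s)"
| "substC x u (CInC m s) = CInC (substC x u m) (substC x u s)"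
| "substC x u (CExt bs) = CExt (map (\<lambda>(l, s). (l, substC x u s)) bs)"
| "substC x u (CInt bs) = CInt (map (\<lambda>(l, s). (l, substC x u s)) bs)"
| "substC x u (CMu y s) = (if x = y then CMu y s else CMu y (substC x u s))"
| "substC x u (CVar y) = (if x = y then u else CVar y)"

text \<open>unfold(mu x.s) = unfold(s[mu x.s/x]), identity otherwise (total on guarded terms).\<close>
partial_function (tailrec) unfoldS :: "('b, 'l) stype \<Rightarrow> ('b, 'l) stype" where
  "unfoldS T = (case T of SMu X S \<Rightarrow> unfoldS (substS X (SMu X S) S) | _ \<Rightarrow> T)"

partial_function (tailrec) unfoldC :: "('b, 'l) contract \<Rightarrow> ('b, 'l) contract" where
  "unfoldC s = (case s of CMu x s' \<Rightarrow> unfoldC (substC x (CMu x s') s') | _ \<Rightarrow> s)"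

fun M :: "('b, 'l) stype \<Rightarrow> ('b, 'l) contract" where
  "M SEnd = COne"
| "M (SOutB t S) = COutB t (M S)"
| "M (SInB t S) = CInB t (M S)"
| "M (SOutS T S) = COutC (M T) (M S)"
| "M (SInS T S) = CInC (M T) (M S)"
| "M (SBra bs) = CExt (map (\<lambda>(l, S). (l, M S)) bs)"
| "M (SSel bs) = CInt (map (\<lambda>(l, S). (l, M S)) bs)"
| "M (SMu X S) = CMu X (M S)"
| "M (SVar X) = CVar X"

definition Sc_step ::
  "('b \<Rightarrow> 'b \<Rightarrow> bool) \<Rightarrow> (('b, 'l) contract \<times> ('b, 'l) contract) set
   \<Rightarrow> (('b, 'l) contract \<times> ('b, 'l) contract) set
   \<Rightarrow> ('b, 'l) contract \<Rightarrow> ('b, 'l) contract \<Rightarrow> bool" where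
  "Sc_step le R B u1 u2 = (case u1 of
      COne \<Rightarrow> u2 = COne
    | CInB t1 s1 \<Rightarrow> (\<exists>t2 s2. u2 = CInB t2 s2 \<and> (s1, s2) \<in> R \<and> le t1 t2)
    | COutB t1 s1 \<Rightarrow> (\<exists>t2 s2. u2 = COutB t2 s2 \<and> (s1, s2) \<in> R \<and> le t2 t1)
    | COutC m1 s1 \<Rightarrow> (\<exists>m2 s2. u2 = COutC m2 s2 \<and> (s1, s2) \<in> R \<and> (m2, m1) \<in> B)
    | CInC m1 s1 \<Rightarrow> (\<exists>m2 s2. u2 = CInC m2 s2 \<and> (s1, s2) \<in> R \<and> (m1, m2) \<in> B)
    | CExt bs1 \<Rightarrow> (\<exists>bs2. u2 = CExt bs2 \<and>
         (\<forall>(l, s1) \<in> set bs1. \<exists>s2. (l, s2) \<in> set bs2 \<and> (s1, s2) \<in> R))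
    | CInt bs1 \<Rightarrow> (\<exists>bs2. u2 = CInt bs2 \<and>
         (\<forall>(l, s2) \<in> set bs2. \<exists>s1. (l, s1) \<in> set bs1 \<and> (s1, s2) \<in> R))
    | CMu x s \<Rightarrow> True
    | CVar x \<Rightarrow> True)"

definition Sc ::
  "('b \<Rightarrow> 'b \<Rightarrow> bool) \<Rightarrow> (('b, 'l) contract \<times> ('b, 'l) contract) set
   \<Rightarrow> (('b, 'l) contract \<times> ('b, 'l) contract) set
   \<Rightarrow> (('b, 'l) contract \<times> ('b, 'l) contract) set" where
  "Sc le R B = {(s1, s2). s1 \<in> SC \<and> s2 \<in> SC \<and> Sc_step le R B (unfoldC s1) (unfoldC s2)}"

definition Fle_step ::
  "('b \<Rightarrow> 'b \<Rightarrow> bool) \<Rightarrow> (('b, 'l) stype \<times> ('b, 'l) stype) set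
   \<Rightarrow> ('b, 'l) stype \<Rightarrow> ('b, 'l) stype \<Rightarrow> bool" where
  "Fle_step le R U1 U2 = (case U1 of
      SEnd \<Rightarrow> U2 = SEnd
    | SInB t1 S1 \<Rightarrow> (\<exists>t2 S2. U2 = SInB t2 S2 \<and> (S1, S2) \<in> R \<and> le t1 t2)
    | SOutB t1 S1 \<Rightarrow> (\<exists>t2 S2. U2 = SOutB t2 S2 \<and> (S1, S2) \<in> R \<and> le t2 t1)
    | SOutS T1 S1 \<Rightarrow> (\<exists>T2 S2. U2 = SOutS T2 S2 \<and> (S1, S2) \<in> R \<and> (T2, T1) \<in> R)
    | SInS T1 S1 \<Rightarrow> (\<exists>T2 S2. U2 = SInS T2 S2 \<and> (S1, S2) \<in> R \<and> (T1, T2) \<in> R)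
    | SBra ts \<Rightarrow> (\<exists>ss. U2 = SBra ss \<and> length ts \<le> length ss \<and>
         (\<forall>i < length ts. fst (ts ! i) = fst (ss ! i) \<and> (snd (ts ! i), snd (ss ! i)) \<in> R))
    | SSel ts \<Rightarrow> (\<exists>ss. U2 = SSel ss \<and> length ss \<le> length ts \<and>
         (\<forall>i < length ss. fst (ts ! i) = fst (ss ! i) \<and> (snd (ts ! i), snd (ss ! i)) \<in> R))
    | SMu X S \<Rightarrow> True
    | SVar X \<Rightarrow> True)"

definition Fle ::
  "('b \<Rightarrow> 'b \<Rightarrow> bool) \<Rightarrow> (('b, 'l) stype \<times> ('b, 'l) stype) set
   \<Rightarrow> (('b, 'l) stype \<times> ('b, 'l) stype) set" where
  "Fle le R = {(T, S). T \<in> ST \<and> S \<in> ST \<and> Fle_step le R (unfoldS T) (unfoldS S)}"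

end

theory Submission
  imports Defs
begin

text \<open>The translation M commutes with substitution, free variables and guardedness, hence
  with unfolding of closed guarded terms. So the unfolded images of a pair in a type simulation
  are the images of the unfolded types, and each clause of the session-type functional is
  carried by M to the corresponding clause of the contract functional; the two argument
  relations of the latter are both instantiated by the image of the simulation.\<close>

lemma M_substS: "M (substS X U S) = substC X (M U) (M S)"
  by (induction S) (auto simp: split_def)

lemma fvC_M: "fvC (M S) = fvS S"
  by (induction S) auto

lemma ugC_M: "ugC (M S) = ugS S"
  by (induction S) auto

lemma guardedC_M: "guardedC (M S) = guardedS S"
  by (induction S) (auto simp: ugC_M)

lemma M_in_SC_iff: "M S \<in> SC \<longleftrightarrow> S \<in> ST"
  by (simp add: SC_def ST_def fvC_M guardedC_M)

lemma ugS_subset_fvS: "ugS S \<subseteq> fvS S"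
  by (induction S) auto

lemma fvS_substS: "fvS (substS X U S) \<subseteq> (fvS S - {X}) \<union> fvS U"
  by (induction S) (auto, fastforce+)

lemma ugS_substS: "ugS (substS X U S) \<subseteq> ugS S \<union> ugS U"
  by (induction S) auto

lemma guardedS_substS:
  assumes "guardedS S" "guardedS U" "fvS U = {}"
  shows "guardedS (substS X U S)"
  using assms
proof (induction S)
  case (SMu Y S)
  have "ugS U = {}" using ugS_subset_fvS[of U] SMu.prems by auto
  then show ?case using SMu ugS_substS[of X U S] by auto
qed auto

lemma substS_in_ST:
  assumes "SMu X S \<in> ST"
  shows "substS X (SMu X S) S \<in> ST"
  using assms fvS_substS[of X "SMu X S" S] guardedS_substS[of S "SMu X S" X]
  by (auto simp: ST_def)

fun mu_depth :: "('b, 'l) stype \<Rightarrow> nat" where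
  "mu_depth (SMu X S) = Suc (mu_depth S)"
| "mu_depth _ = 0"

text \<open>Guardedness makes the number of leading binders drop at each unfolding step.\<close>
lemma mu_depth_substS: "X \<notin> ugS S \<Longrightarrow> mu_depth (substS X U S) = mu_depth S"
  by (induction S) auto

lemma unfoldC_M:
  assumes "S \<in> ST"
  shows "unfoldC (M S) = M (unfoldS S)"
  using assms
proof (induction "mu_depth S" arbitrary: S rule: less_induct)
  case less
  show ?case
  proof (cases S)
    case (SMu X S1)
    let ?S' = "substS X S S1"
    have closed: "?S' \<in> ST" using less.prems SMu substS_in_ST by blast
    have smaller: "mu_depth ?S' < mu_depth S"
      using less.prems SMu mu_depth_substS[of X S1 S] by (auto simp: ST_def)
    have "unfoldC (M S) = unfoldC (substC X (CMu X (M S1)) (M S1))"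
      using SMu by (subst unfoldC.simps) simp
    also have "\<dots> = unfoldC (M ?S')" using SMu by (simp add: M_substS)
    also have "\<dots> = M (unfoldS ?S')" using less.hyps[OF smaller closed] .
    also have "\<dots> = M (unfoldS S)" using SMu by (subst (2) unfoldS.simps) simp
    finally show ?thesis .
  qed (subst unfoldC.simps, subst unfoldS.simps, simp)+
qed

lemma labels_prefix_simulate:
  assumes "length ts \<le> length ss"
    and "\<forall>i < length ts. fst (ts ! i) = fst (ss ! i) \<and> P (snd (ts ! i)) (snd (ss ! i))"
  shows "\<forall>(l, x) \<in> set ts. \<exists>y. (l, y) \<in> set ss \<and> P x y"
proof clarify
  fix l x assume "(l, x) \<in> set ts"
  then obtain i where i: "i < length ts" "ts ! i = (l, x)" by (auto simp: in_set_conv_nth)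
  then have "(l, snd (ss ! i)) \<in> set ss"
    using assms by (metis fst_conv nth_mem order_less_le_trans prod.collapse)
  then show "\<exists>y. (l, y) \<in> set ss \<and> P x y" using assms(2) i by (metis snd_conv)
qed

lemma Sc_step_M_if_Fle_step:
  assumes "Fle_step le R U V"
  shows "Sc_step le {(M S, M T) | S T. (S, T) \<in> R} {(M S, M T) | S T. (S, T) \<in> R} (M U) (M V)"
proof (cases U)
  case (SBra ts)
  then obtain ss where ss: "V = SBra ss" and
    "\<forall>(l, S) \<in> set ts. \<exists>T. (l, T) \<in> set ss \<and> (S, T) \<in> R"
    using assms labels_prefix_simulate[of ts _ "\<lambda>S T. (S, T) \<in> R"]
    by (auto simp: Fle_step_def)
  then show ?thesis using SBra by (fastforce simp: Sc_step_def)
next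
  case (SSel ts)
  then obtain ss where ss: "V = SSel ss" "length ss \<le> length ts"
    "\<forall>i < length ss. fst (ss ! i) = fst (ts ! i) \<and> (snd (ts ! i), snd (ss ! i)) \<in> R"
    using assms by (auto simp: Fle_step_def)
  then have "\<forall>(l, T) \<in> set ss. \<exists>S. (l, S) \<in> set ts \<and> (S, T) \<in> R"
    using labels_prefix_simulate[of ss ts "\<lambda>T S. (S, T) \<in> R"] by simp
  then show ?thesis using SSel ss(1) by (fastforce simp: Sc_step_def)
qed (use assms in \<open>(auto simp: Fle_step_def Sc_step_def; blast)\<close>)+

theorem mainTheorem16:
  fixes le :: "'b \<Rightarrow> 'b \<Rightarrow> bool"
    and Tr :: "(('b, 'l) stype \<times> ('b, 'l) stype) set"
  assumes "reflp le" and "transp le"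
    and "Tr \<subseteq> ST \<times> ST"
    and "Tr \<subseteq> Fle le Tr"
  shows "{(M S, M T) | S T. (S, T) \<in> Tr}
           \<subseteq> Sc le {(M S, M T) | S T. (S, T) \<in> Tr} {(M S, M T) | S T. (S, T) \<in> Tr}"
proof clarify
  fix S T assume "(S, T) \<in> Tr"
  then have closed: "S \<in> ST" "T \<in> ST"
    and "Fle_step le Tr (unfoldS S) (unfoldS T)"
    using assms(3,4) by (auto simp: Fle_def)
  then have "Sc_step le {(M S, M T) | S T. (S, T) \<in> Tr} {(M S, M T) | S T. (S, T) \<in> Tr}
      (unfoldC (M S)) (unfoldC (M T))"
    by (simp add: unfoldC_M Sc_step_M_if_Fle_step)
  with closed show "(M S, M T) \<in> Sc le {(M S, M T) | S T. (S, T) \<in> Tr} {(M S, M T) | S T. (S, T) \<in> Tr}"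
    by (simp add: Sc_def M_in_SC_iff)
qed

end
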